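(* Let $S=(P,L)$ be a $(2,2)$-generalized quadrangle and let $(R,\psi)$ be a faithful representation of $S$ with $\psi(x)=\langle r_x\rangle$ and $|R|=2^4$. Let $a,b,c$ be three distinct points of $S$ with $r_ar_br_c=1$. Then $\{a,b,c\}$ is either a line or a complete $3$-arc of $S$.
   Context: A $(2,t)$-generalized quadrangle is a partial linear space in which every line has exactly $3$ points, every point lies on exactly $t+1$ lines, no point is collinear with all points, and for every point $x$ and line $\ell$ with $x\notin\ell$, $x$ is collinear with exactly one point of $\ell$. A $k$-arc is a set of $k$ pairwise non-collinear points; it is complete if it is not contained in a $(k+1)$-arc. A representation $(R,\psi)$ of $S$ is a group $R$ with a map $\psi$ assigning to each point $x$ a subgroup $\psi(x)=\langle r_x\rangle$ of order $2$, such that $R$ is generated by the $r_x$ and, for every line $\{x,y,z\}$, $\{1,r_x,r_y,r_z\}$ is a Klein four subgroup. It is faithful if $\psi$ is injective. *)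

theory Defs
  imports "HOL-Algebra.Algebra"
begin

definition collinear :: "'p set set \<Rightarrow> 'p \<Rightarrow> 'p \<Rightarrow> bool" where
  "collinear L x y \<longleftrightarrow> (\<exists>l\<in>L. x \<in> l \<and> y \<in> l)"

definition partial_linear_space :: "'p set \<Rightarrow> 'p set set \<Rightarrow> bool" where
  "partial_linear_space P L \<longleftrightarrow>
     (\<forall>l\<in>L. l \<subseteq> P \<and> finite l \<and> card l \<ge> 2) \<and>
     (\<forall>x\<in>P. \<forall>y\<in>P. x \<noteq> y \<longrightarrow> card {l\<in>L. x \<in> l \<and> y \<in> l} \<le> 1 \<and> finite {l\<in>L. x \<in> l \<and> y \<in> l})"

definition gen_quadrangle_2t :: "nat \<Rightarrow> 'p set \<Rightarrow> 'p set set \<Rightarrow> bool" where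
  "gen_quadrangle_2t t P L \<longleftrightarrow>
     partial_linear_space P L \<and>
     (\<forall>l\<in>L. card l = 3) \<and>
     (\<forall>x\<in>P. finite {l\<in>L. x \<in> l} \<and> card {l\<in>L. x \<in> l} = t + 1) \<and>
     (\<forall>x\<in>P. \<exists>y\<in>P. \<not> collinear L x y) \<and>
     (\<forall>x\<in>P. \<forall>l\<in>L. x \<notin> l \<longrightarrow> (\<exists>!y. y \<in> l \<and> collinear L x y))"

definition is_arc :: "'p set \<Rightarrow> 'p set set \<Rightarrow> nat \<Rightarrow> 'p set \<Rightarrow> bool" where
  "is_arc P L k A \<longleftrightarrow> A \<subseteq> P \<and> finite A \<and> card A = k \<and>
     (\<forall>x\<in>A. \<forall>y\<in>A. x \<noteq> y \<longrightarrow> \<not> collinear L x y)"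

definition is_complete_arc :: "'p set \<Rightarrow> 'p set set \<Rightarrow> nat \<Rightarrow> 'p set \<Rightarrow> bool" where
  "is_complete_arc P L k A \<longleftrightarrow> is_arc P L k A \<and>
     \<not> (\<exists>B. is_arc P L (k + 1) B \<and> A \<subseteq> B)"

definition klein_four_subgroup :: "('g, 'b) monoid_scheme \<Rightarrow> 'g set \<Rightarrow> bool" where
  "klein_four_subgroup R K \<longleftrightarrow> subgroup K R \<and> finite K \<and> card K = 4 \<and>
     (\<forall>k\<in>K. k \<otimes>\<^bsub>R\<^esub> k = \<one>\<^bsub>R\<^esub>)"

definition rep_psi :: "('g, 'b) monoid_scheme \<Rightarrow> ('p \<Rightarrow> 'g) \<Rightarrow> 'p \<Rightarrow> 'g set" where
  "rep_psi R r x = generate R {r x}"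

definition representation ::
    "'p set \<Rightarrow> 'p set set \<Rightarrow> ('g, 'b) monoid_scheme \<Rightarrow> ('p \<Rightarrow> 'g) \<Rightarrow> bool" where
  "representation P L R r \<longleftrightarrow> group R \<and>
     (\<forall>x\<in>P. r x \<in> carrier R \<and> finite (rep_psi R r x) \<and> card (rep_psi R r x) = 2) \<and>
     generate R (r ` P) = carrier R \<and>
     (\<forall>x y z. {x, y, z} \<in> L \<longrightarrow> x \<noteq> y \<longrightarrow> y \<noteq> z \<longrightarrow> x \<noteq> z \<longrightarrow>
        klein_four_subgroup R {\<one>\<^bsub>R\<^esub>, r x, r y, r z})"

definition faithful_representation ::
    "'p set \<Rightarrow> 'p set set \<Rightarrow> ('g, 'b) monoid_scheme \<Rightarrow> ('p \<Rightarrow> 'g) \<Rightarrow> bool" where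
  "faithful_representation P L R r \<longleftrightarrow> representation P L R r \<and> inj_on (rep_psi R r) P"

end

theory Submission
  imports Defs
begin

(*
  Every r x is a non-trivial involution and r x r y = r z on each line {x, y, z}, so if
  r a r b = r c and {a, b, c} is not a line, then a, b, c are pairwise non-collinear.
  The key step: every point x collinear with a and b is collinear with c. Otherwise c is
  collinear with the third point p of the line xa, and the third point of the line cp is the
  third point q of xb (as r c r p = r b r x = r q), so p is collinear with two points of the
  line xbq. Now let d be collinear with none of a, b, c. If d is collinear with two
  non-collinear points y1, y2 of {a, b}-perp = perp a \<inter> perp b, then {a, b, c, d} lies
  in {y1, y2}-perp, which has at most t + 1 \<le> 3 points. Otherwise d misses some y in
  {a, b}-perp; then d is collinear with the third points p of ya and q of yb, and
  r p r q = r c, so the key step for p, q, c makes d collinear with c.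
*)

context group
begin

lemma klein_four_subgroup_square:
  assumes "klein_four_subgroup G K" "k \<in> K"
  shows "k \<in> carrier G" "k \<otimes> k = \<one>"
  using assms subgroup.subset unfolding klein_four_subgroup_def by blast+

lemma klein_four_subgroup_distinct:
  assumes "klein_four_subgroup G {\<one>, x, y, z}"
  shows "distinct [\<one>, x, y, z]"
  using assms unfolding klein_four_subgroup_def by (auto simp: card_insert_if split: if_splits)

lemma klein_four_subgroup_mult:
  assumes K: "klein_four_subgroup G {\<one>, x, y, z}"
  shows "x \<otimes> y = z"
proof -
  have sub: "subgroup {\<one>, x, y, z} G"
    using K unfolding klein_four_subgroup_def by blast
  have xy: "x \<in> carrier G" "y \<in> carrier G" "x \<otimes> x = \<one>"
    using klein_four_subgroup_square[OF K] by auto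
  have ne: "x \<noteq> \<one>" "y \<noteq> \<one>" "x \<noteq> y"
    using klein_four_subgroup_distinct[OF K] by auto
  have "x \<otimes> y \<in> {\<one>, x, y, z}"
    using subgroup.m_closed[OF sub] by blast
  moreover have "x \<otimes> y \<noteq> \<one>"
  proof
    assume "x \<otimes> y = \<one>"
    then have "x \<otimes> y = x \<otimes> x" using xy(3) by simp
    then show False using xy(1,2) ne(3) by simp
  qed
  moreover have "x \<otimes> y \<noteq> x" "x \<otimes> y \<noteq> y"
    using l_cancel_one'[OF xy(1,2)] r_cancel_one'[OF xy(2,1)] ne(1,2) by metis+
  ultimately show ?thesis by blast
qed

lemma involution_mult_eq:
  assumes "x \<in> carrier G" "y \<in> carrier G" "z \<in> carrier G" "z \<otimes> z = \<one>" "x \<otimes> y \<otimes> z = \<one>"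
  shows "x \<otimes> y = z"
  using assms by (metis inv_equality m_closed)

lemma involution_cancel_left:
  assumes "x \<in> carrier G" "z \<in> carrier G" "x \<otimes> x = \<one>"
  shows "x \<otimes> (x \<otimes> z) = z"
  using assms by (simp flip: m_assoc)

lemma involution_mult_rotate:
  assumes "x \<in> carrier G" "y \<in> carrier G" "z \<in> carrier G" "x \<otimes> x = \<one>" "z \<otimes> z = \<one>"
    and "x \<otimes> y = z"
  shows "y \<otimes> z = x"
proof -
  have "x \<otimes> (y \<otimes> z) = \<one>"
    using assms by (simp flip: m_assoc)
  then have "y \<otimes> z \<otimes> x = \<one>"
    using assms by (simp add: inv_comm)
  then show ?thesis
    using assms involution_mult_eq by simp
qed

lemma commuting_involution_cancel:
  assumes "x \<in> carrier G" "y \<in> carrier G" "z \<in> carrier G" "x \<otimes> x = \<one>" "y \<otimes> x = x \<otimes> y"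
  shows "x \<otimes> y \<otimes> (x \<otimes> z) = y \<otimes> z"
proof -
  have "x \<otimes> y \<otimes> (x \<otimes> z) = y \<otimes> x \<otimes> (x \<otimes> z)"
    by (simp only: assms(5))
  also have "\<dots> = y \<otimes> z"
    using assms(1-4) by (simp add: m_assoc involution_cancel_left)
  finally show ?thesis .
qed

lemma involutions_commute:
  assumes "x \<in> carrier G" "y \<in> carrier G" "x \<otimes> x = \<one>" "y \<otimes> y = \<one>"
    and "x \<otimes> y \<otimes> (x \<otimes> y) = \<one>"
  shows "y \<otimes> x = x \<otimes> y"
  using assms by (metis inv_equality inv_mult_group m_closed)

end

lemma collinear_sym: "collinear L x y \<Longrightarrow> collinear L y x"
  unfolding collinear_def by blast

lemma collinearI: "l \<in> L \<Longrightarrow> x \<in> l \<Longrightarrow> y \<in> l \<Longrightarrow> collinear L x y"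
  unfolding collinear_def by blast

lemma is_complete_arcI:
  assumes arc: "is_arc P L k A" and cover: "\<And>d. d \<in> P \<Longrightarrow> d \<notin> A \<Longrightarrow> \<exists>x\<in>A. collinear L d x"
  shows "is_complete_arc P L k A"
proof -
  have "\<not> A \<subseteq> B" if B: "is_arc P L (k + 1) B" for B
  proof
    assume AB: "A \<subseteq> B"
    have "card A \<noteq> card B"
      using arc B unfolding is_arc_def by simp
    then have "A \<subset> B"
      using AB by blast
    then obtain d where d: "d \<in> B" "d \<notin> A"
      using psubset_imp_ex_mem by blast
    have "d \<in> P"
      using B d(1) unfolding is_arc_def by blast
    then obtain x where x: "x \<in> A" "collinear L d x"
      using cover d(2) by blast
    moreover have "x \<in> B" "d \<noteq> x"
      using x(1) AB d(2) by auto
    ultimately show False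
      using B d(1) unfolding is_arc_def by blast
  qed
  then show ?thesis
    using arc unfolding is_complete_arc_def by blast
qed

locale gen_quadrangle =
  fixes t :: nat and P :: "'p set" and L :: "'p set set"
  assumes gen_quadrangle: "gen_quadrangle_2t t P L"
begin

definition perp :: "'p \<Rightarrow> 'p set" where
  "perp x = {y \<in> P. collinear L x y}"

lemma mem_perp: "y \<in> perp x \<longleftrightarrow> y \<in> P \<and> collinear L x y"
  unfolding perp_def by blast

lemma line_subset: "l \<in> L \<Longrightarrow> l \<subseteq> P"
  using gen_quadrangle unfolding gen_quadrangle_2t_def partial_linear_space_def by blast

lemma card_line: "l \<in> L \<Longrightarrow> card l = 3"
  using gen_quadrangle unfolding gen_quadrangle_2t_def by blast

lemma card_lines_through: "x \<in> P \<Longrightarrow> card {l \<in> L. x \<in> l} = t + 1"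
  using gen_quadrangle unfolding gen_quadrangle_2t_def by blast

lemma finite_lines_through: "x \<in> P \<Longrightarrow> finite {l \<in> L. x \<in> l}"
  using gen_quadrangle unfolding gen_quadrangle_2t_def by blast

lemma line_unique:
  assumes "l \<in> L" "l' \<in> L" "x \<noteq> y" "x \<in> l" "y \<in> l" "x \<in> l'" "y \<in> l'"
  shows "l = l'"
proof -
  have "x \<in> P" "y \<in> P"
    using assms line_subset by auto
  then have "finite {l \<in> L. x \<in> l \<and> y \<in> l}" "card {l \<in> L. x \<in> l \<and> y \<in> l} \<le> 1"
    using gen_quadrangle \<open>x \<noteq> y\<close> unfolding gen_quadrangle_2t_def partial_linear_space_def by auto
  then show ?thesis
    using assms by (auto simp: card_le_Suc0_iff_eq)
qed

lemma ex1_collinear_on_line: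
  assumes "x \<in> P" "l \<in> L" "x \<notin> l"
  shows "\<exists>!y. y \<in> l \<and> collinear L x y"
proof -
  have "\<forall>x\<in>P. \<forall>l\<in>L. x \<notin> l \<longrightarrow> (\<exists>!y. y \<in> l \<and> collinear L x y)"
    using gen_quadrangle unfolding gen_quadrangle_2t_def by (elim conjE)
  then show ?thesis
    using assms by blast
qed

lemma ex_perp_on_line:
  assumes "x \<in> P" "l \<in> L" "x \<notin> l"
  obtains y where "y \<in> l" "y \<in> perp x"
proof -
  obtain y where "y \<in> l" "collinear L x y"
    using ex1_collinear_on_line[OF assms] by blast
  then show ?thesis
    using that line_subset[OF assms(2)] unfolding mem_perp by blast
qed

lemma perp_on_line_unique:
  assumes "x \<in> P" "l \<in> L" "x \<notin> l" "y \<in> l" "y' \<in> l" "y \<in> perp x" "y' \<in> perp x"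
  shows "y = y'"
  using ex1_collinear_on_line[OF assms(1-3)] assms(4-7) unfolding mem_perp by blast

lemma perp_third_point:
  assumes "{x, y, z} \<in> L" "c \<in> P" "c \<notin> {x, y, z}" "x \<notin> perp c" "y \<notin> perp c"
  shows "z \<in> perp c"
proof -
  obtain e where "e \<in> {x, y, z}" "e \<in> perp c"
    using ex_perp_on_line[OF assms(2,1,3)] by blast
  then show ?thesis
    using assms(4,5) by blast
qed

lemma self_mem_perp:
  assumes "x \<in> P"
  shows "x \<in> perp x"
proof -
  have "{l \<in> L. x \<in> l} \<noteq> {}"
    using card_lines_through[OF assms] by (metis card.empty add_is_0 zero_neq_one)
  then obtain l where l: "l \<in> L" "x \<in> l"
    by blast
  then show ?thesis
    using assms collinearI[OF l l(2)] unfolding mem_perp by blast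
qed

lemma perp_sym: "x \<in> P \<Longrightarrow> y \<in> perp x \<Longrightarrow> x \<in> perp y"
  unfolding mem_perp by (simp add: collinear_sym)

lemma line_subset_perp:
  assumes "l \<in> L" "x \<in> l"
  shows "l \<subseteq> perp x"
proof
  fix y assume "y \<in> l"
  then show "y \<in> perp x"
    using line_subset[OF assms(1)] collinearI[OF assms] unfolding mem_perp by blast
qed

lemma not_perp_on_lines_through:
  assumes "l \<in> L" "m \<in> L" "l \<noteq> m" "x \<in> l" "x \<in> m" "p \<in> l" "q \<in> m" "p \<noteq> x" "q \<noteq> x"
  shows "q \<notin> perp p"
proof
  assume "q \<in> perp p"
  have "p \<notin> m"
    using line_unique assms by blast
  moreover have "x \<in> perp p"
    using line_subset_perp assms(1,4,6) by blast
  moreover have "p \<in> P"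
    using line_subset assms(1,6) by blast
  ultimately show False
    using perp_on_line_unique[of p m x q] assms(2,5,7,9) \<open>q \<in> perp p\<close> by blast
qed

lemma third_point_on_line:
  assumes "x \<noteq> y" "y \<in> perp x"
  obtains z where "{x, y, z} \<in> L" "x \<noteq> z" "y \<noteq> z"
proof -
  obtain l where l: "l \<in> L" "x \<in> l" "y \<in> l"
    using assms(2) unfolding mem_perp collinear_def by blast
  then have "card (l - {x, y}) = 1"
    using card_line assms(1) by (simp add: card_Diff_subset)
  then obtain z where "l - {x, y} = {z}"
    by (meson card_1_singletonE)
  then have "l = {x, y, z}" "x \<noteq> z" "y \<noteq> z"
    using l by auto
  then show ?thesis
    using that l(1) by blast
qed

lemma card_perp_inter_le:
  assumes y: "y1 \<in> P" "y2 \<in> P" "y2 \<notin> perp y1"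
  shows "finite (perp y1 \<inter> perp y2)" "card (perp y1 \<inter> perp y2) \<le> t + 1"
proof -
  let ?S = "perp y1 \<inter> perp y2"
  define m where "m z = (SOME l. l \<in> L \<and> y1 \<in> l \<and> z \<in> l)" for z
  have m: "m z \<in> L \<and> y1 \<in> m z \<and> z \<in> m z" if "z \<in> ?S" for z
  proof -
    have "\<exists>l. l \<in> L \<and> y1 \<in> l \<and> z \<in> l"
      using that unfolding perp_def collinear_def by blast
    then show ?thesis
      unfolding m_def by (rule someI_ex)
  qed
  have "y2 \<notin> m z" if "z \<in> ?S" for z
    using m[OF that] line_subset_perp y(2,3) by blast
  \<comment> \<open>y2 is collinear with only one point of each line through y1\<close>
  then have inj: "inj_on m ?S"
    using m perp_on_line_unique[OF y(2)] perp_sym[OF y(2)] by (intro inj_onI) (metis IntE)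
  have sub: "m ` ?S \<subseteq> {l \<in> L. y1 \<in> l}"
    using m by auto
  show "finite ?S"
    using inj_on_finite[OF inj sub finite_lines_through[OF y(1)]] .
  show "card ?S \<le> t + 1"
    using card_inj_on_le[OF inj sub finite_lines_through[OF y(1)]] card_lines_through[OF y(1)] by simp
qed

lemma two_noncollinear_in_perp_inter:
  assumes "1 \<le> t" "a \<in> P" "b \<in> P" "b \<notin> perp a"
  obtains y1 y2 where "y1 \<in> perp a \<inter> perp b" "y2 \<in> perp a \<inter> perp b" "y2 \<notin> perp y1"
proof -
  have "2 \<le> card {l \<in> L. a \<in> l}"
    using card_lines_through[OF assms(2)] assms(1) by simp
  then obtain l1 l2 where l: "l1 \<in> L" "a \<in> l1" "l2 \<in> L" "a \<in> l2" "l1 \<noteq> l2"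
    by (auto simp: numeral_2_eq_2 card_le_Suc_iff)
  have "b \<notin> l1" "b \<notin> l2"
    using l line_subset_perp assms(4) by blast+
  then obtain y1 y2 where y: "y1 \<in> l1" "y1 \<in> perp b" "y2 \<in> l2" "y2 \<in> perp b"
    using ex_perp_on_line[OF assms(3)] l by metis
  have ya: "y1 \<in> perp a" "y2 \<in> perp a"
    using y l line_subset_perp by blast+
  have "y1 \<noteq> a" "y2 \<noteq> a"
    using y assms(3,4) perp_sym by blast+
  then have "y2 \<notin> perp y1"
    using not_perp_on_lines_through[OF l(1,3,5,2,4)] y(1,3) by blast
  with y ya that show ?thesis
    by blast
qed

end

locale gq_representation = gen_quadrangle t P L + group G
  for t and P :: "'p set" and L and G (structure) +
  fixes r
  assumes faithful: "faithful_representation P L G r"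
begin

lemma klein_four_subgroup_line:
  assumes "{x, y, z} \<in> L" "x \<noteq> y" "y \<noteq> z" "x \<noteq> z"
  shows "klein_four_subgroup G {\<one>, r x, r y, r z}"
proof -
  have "\<forall>x y z. {x, y, z} \<in> L \<longrightarrow> x \<noteq> y \<longrightarrow> y \<noteq> z \<longrightarrow> x \<noteq> z \<longrightarrow>
      klein_four_subgroup G {\<one>, r x, r y, r z}"
    using faithful unfolding faithful_representation_def representation_def by (elim conjE)
  then show ?thesis
    using assms by blast
qed

lemma r_line:
  assumes "{x, y, z} \<in> L" "x \<noteq> y" "y \<noteq> z" "x \<noteq> z"
  shows "r x \<otimes> r y = r z"
  using klein_four_subgroup_mult klein_four_subgroup_line[OF assms] .

lemma r_involution:
  assumes "x \<in> P"
  shows "r x \<in> carrier G" "r x \<otimes> r x = \<one>" "r x \<noteq> \<one>"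
proof -
  have "{l \<in> L. x \<in> l} \<noteq> {}"
    using self_mem_perp[OF assms] unfolding mem_perp collinear_def by blast
  then obtain l where l: "l \<in> L" "x \<in> l"
    by blast
  then have "card (l - {x}) = 2"
    using card_line[OF l(1)] by simp
  then obtain u v where uv: "l - {x} = {u, v}" "u \<noteq> v"
    by (meson card_2_iff)
  then have "l = {x, u, v}" "u \<noteq> x" "v \<noteq> x"
    using l(2) by blast+
  then have K: "klein_four_subgroup G {\<one>, r x, r u, r v}"
    using klein_four_subgroup_line l(1) uv(2) by metis
  show "r x \<in> carrier G" "r x \<otimes> r x = \<one>"
    using klein_four_subgroup_square[OF K] by auto
  show "r x \<noteq> \<one>"
    using klein_four_subgroup_distinct[OF K] by auto
qed

lemma inj_on_r: "inj_on r P"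
proof (rule inj_onI)
  fix x y assume xy: "x \<in> P" "y \<in> P" "r x = r y"
  have "inj_on (rep_psi G r) P"
    using faithful unfolding faithful_representation_def by blast
  moreover have "rep_psi G r x = rep_psi G r y"
    unfolding rep_psi_def using xy(3) by simp
  ultimately show "x = y"
    using xy(1,2) by (rule inj_onD)
qed

lemma r_eq_iff: "x \<in> P \<Longrightarrow> y \<in> P \<Longrightarrow> r x = r y \<longleftrightarrow> x = y"
  using inj_on_r by (auto dest: inj_onD)

lemma line_if_r_mult:
  assumes "z \<in> P" "x \<noteq> y" "y \<in> perp x" "r x \<otimes> r y = r z"
  shows "{x, y, z} \<in> L"
proof -
  obtain w where w: "{x, y, w} \<in> L" "x \<noteq> w" "y \<noteq> w"
    using third_point_on_line assms(2,3) by blast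
  have "r w = r z"
    using r_line[OF w(1) assms(2) w(3) w(2)] assms(4) by simp
  moreover have "w \<in> P"
    using line_subset w(1) by blast
  ultimately have "w = z"
    using r_eq_iff assms(1) by blast
  then show ?thesis
    using w(1) by simp
qed

lemma r_mult_commute:
  assumes "x \<in> P" "y \<in> P" "z \<in> P" "r x \<otimes> r y = r z"
  shows "r y \<otimes> r x = r x \<otimes> r y"
proof (rule involutions_commute)
  show "r x \<otimes> r y \<otimes> (r x \<otimes> r y) = \<one>"
    using assms(3,4) r_involution(2) by simp
qed (use assms(1,2) r_involution in auto)

lemma third_point_r_mult:
  assumes "x \<in> P" "a \<in> P" "x \<noteq> a" "a \<in> perp x"
  obtains p where "{x, a, p} \<in> L" "x \<noteq> p" "a \<noteq> p" "p \<in> P"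
    and "r x \<otimes> r a = r p" "r a \<otimes> r x = r p"
proof -
  obtain p where lp: "{x, a, p} \<in> L" "x \<noteq> p" "a \<noteq> p"
    using third_point_on_line[OF assms(3,4)] by blast
  have pP: "p \<in> P"
    using line_subset lp(1) by blast
  have rxa: "r x \<otimes> r a = r p"
    using r_line lp assms(3) by blast
  moreover have "r a \<otimes> r x = r p"
    using rxa r_mult_commute[OF assms(1,2) pP rxa] by simp
  ultimately show ?thesis
    using that lp pP by blast
qed

lemma r_mult_rotate:
  assumes "x \<in> P" "y \<in> P" "z \<in> P" "r x \<otimes> r y = r z"
  shows "r y \<otimes> r z = r x"
  by (rule involution_mult_rotate) (use assms r_involution in auto)

lemma not_perp_if_r_mult:
  assumes "x \<in> P" "y \<in> P" "z \<in> P" "r x \<otimes> r y = r z" "{x, y, z} \<notin> L"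
  shows "y \<notin> perp x"
proof
  assume "y \<in> perp x"
  moreover have "x \<noteq> y"
  proof
    assume "x = y"
    then have "r z = \<one>"
      using assms(1,4) r_involution(2) by simp
    then show False
      using assms(3) r_involution(3) by blast
  qed
  ultimately show False
    using line_if_r_mult assms(3-5) by blast
qed

lemma not_perp_if_r_mult_triple:
  assumes "a \<in> P" "b \<in> P" "c \<in> P" "r a \<otimes> r b = r c" "{a, b, c} \<notin> L"
  shows "b \<notin> perp a" "c \<notin> perp b" "a \<notin> perp c"
proof -
  have "r b \<otimes> r c = r a" "r c \<otimes> r a = r b"
    using r_mult_rotate[OF assms(1-4)] r_mult_rotate[OF assms(2,3,1)] by blast+
  moreover have "{b, c, a} \<notin> L" "{c, a, b} \<notin> L"
    using assms(5) by (simp_all add: insert_commute)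
  ultimately show "b \<notin> perp a" "c \<notin> perp b" "a \<notin> perp c"
    using assms not_perp_if_r_mult by blast+
qed

lemma perp_inter_subset_perp_mult:
  assumes abc: "a \<in> P" "b \<in> P" "c \<in> P" and rc: "r a \<otimes> r b = r c" and nl: "{a, b, c} \<notin> L"
  shows "perp a \<inter> perp b \<subseteq> perp c"
proof
  fix x assume "x \<in> perp a \<inter> perp b"
  then have x: "x \<in> perp a" "x \<in> perp b"
    by blast+
  have nperp: "b \<notin> perp a" "a \<notin> perp c"
    using not_perp_if_r_mult_triple[OF abc rc nl] by blast+
  have xP: "x \<in> P"
    using x(1) mem_perp by blast
  have ax: "a \<in> perp x" and bx: "b \<in> perp x"
    using perp_sym abc x by blast+
  have xa: "x \<noteq> a" and xb: "x \<noteq> b"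
    using bx x(1) nperp(1) by auto
  obtain p where lp: "{x, a, p} \<in> L" "x \<noteq> p" "p \<in> P" and rp: "r a \<otimes> r x = r p"
    using third_point_r_mult[OF xP abc(1) xa ax] by blast
  obtain q where lq: "{x, b, q} \<in> L" "x \<noteq> q" "q \<in> P" and rbx: "r b \<otimes> r x = r q"
    using third_point_r_mult[OF xP abc(2) xb bx] by blast
  have ab: "r b \<otimes> r a = r a \<otimes> r b"
    using r_mult_commute[OF abc rc] .
  show "x \<in> perp c"
  proof (rule ccontr)
    assume nxc: "x \<notin> perp c"
    have "c \<noteq> p"
    proof
      assume "c = p"
      then have "r a \<otimes> r b = r a \<otimes> r x"
        using rc rp by simp
      then have "r b = r x"
        using abc xP r_involution(1) by simp
      then show False
        using r_eq_iff abc(2) xP xb by blast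
    qed
    moreover have "c \<noteq> x" "c \<noteq> a"
      using nxc nperp(2) self_mem_perp[OF abc(3)] by blast+
    ultimately have pc: "p \<in> perp c"
      using perp_third_point[OF lp(1) abc(3) _ nxc nperp(2)] by blast
    have "r c \<otimes> r p = r a \<otimes> r b \<otimes> (r a \<otimes> r x)"
      by (simp only: rc rp)
    also have "\<dots> = r b \<otimes> r x"
      using commuting_involution_cancel ab abc xP r_involution by blast
    also have "\<dots> = r q"
      by (rule rbx)
    finally have "{c, p, q} \<in> L"
      using line_if_r_mult[OF lq(3) \<open>c \<noteq> p\<close> pc] by blast
    then have "q \<in> perp p"
      using line_subset_perp by blast
    moreover have "{x, a, p} \<noteq> {x, b, q}"
      using line_subset_perp[OF lp(1)] nperp(1) by blast
    ultimately show False
      using not_perp_on_lines_through[OF lp(1) lq(1)] lp(2) lq(2) by blast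
  qed
qed

lemma perp_mult_if_not_perp:
  assumes abc: "a \<in> P" "b \<in> P" "c \<in> P" and rc: "r a \<otimes> r b = r c" and nl: "{a, b, c} \<notin> L"
    and y: "y \<in> perp a \<inter> perp b"
    and d: "d \<in> P" "d \<notin> perp a" "d \<notin> perp b" "d \<notin> perp y"
  shows "d \<in> perp c"
proof -
  have nperp: "b \<notin> perp a" "c \<notin> perp a"
    using not_perp_if_r_mult_triple[OF abc rc nl] perp_sym[OF abc(1)] by blast+
  have ya: "y \<in> perp a" and yb: "y \<in> perp b"
    using y by blast+
  have yP: "y \<in> P"
    using ya mem_perp by blast
  have y_perp: "a \<in> perp y" "b \<in> perp y"
    using perp_sym abc ya yb by blast+
  have y_ne: "y \<noteq> a" "y \<noteq> b"
    using y_perp(2) ya nperp(1) by auto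
  obtain p where lp: "{y, a, p} \<in> L" "y \<noteq> p" "p \<in> P" and rp: "r a \<otimes> r y = r p"
    using third_point_r_mult[OF yP abc(1) y_ne(1) y_perp(1)] by blast
  obtain q where lq: "{y, b, q} \<in> L" "q \<in> P" and rq: "r y \<otimes> r b = r q"
    using third_point_r_mult[OF yP abc(2) y_ne(2) y_perp(2)] by blast
  have not_on_lines: "d \<notin> {y, a, p}" "d \<notin> {y, b, q}"
    using d(4) line_subset_perp lp(1) lq(1) by blast+
  have "y \<notin> perp d" "a \<notin> perp d" "b \<notin> perp d"
    using d yP abc perp_sym by blast+
  then have "p \<in> perp d" "q \<in> perp d"
    using perp_third_point[OF lp(1) d(1) not_on_lines(1)] perp_third_point[OF lq(1) d(1) not_on_lines(2)]
    by blast+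
  then have "d \<in> perp p \<inter> perp q"
    using perp_sym d(1) by blast
  moreover have "r p \<otimes> r q = r c"
  proof -
    have "r p \<otimes> r q = r a \<otimes> r y \<otimes> (r y \<otimes> r b)"
      by (simp only: rp rq)
    also have "\<dots> = r a \<otimes> r b"
      using abc yP r_involution by (simp add: m_assoc involution_cancel_left)
    finally show ?thesis
      using rc by simp
  qed
  moreover have "{p, q, c} \<notin> L"
  proof
    assume "{p, q, c} \<in> L"
    then have "p \<in> perp c"
      using line_subset_perp by blast
    moreover have "y \<in> perp c"
      using perp_inter_subset_perp_mult[OF abc rc nl] y by blast
    moreover have "c \<notin> {y, a, p}"
      using nperp(2) lp(1) line_subset_perp by blast
    ultimately show False
      using perp_on_line_unique[OF abc(3) lp(1)] lp(2) by blast
  qed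
  ultimately show ?thesis
    using perp_inter_subset_perp_mult[OF lp(3) lq(2) abc(3)] by blast
qed

lemma perp_mult_cover:
  assumes t: "1 \<le> t" "t \<le> 2"
    and abc: "a \<in> P" "b \<in> P" "c \<in> P" and rc: "r a \<otimes> r b = r c" and nl: "{a, b, c} \<notin> L"
    and d: "d \<in> P"
  shows "d \<in> perp a \<union> perp b \<union> perp c"
proof (rule ccontr)
  assume nd: "d \<notin> perp a \<union> perp b \<union> perp c"
  have nperp: "b \<notin> perp a" "c \<notin> perp b" "a \<notin> perp c"
    using not_perp_if_r_mult_triple[OF abc rc nl] by blast+
  obtain y1 y2 where y: "y1 \<in> perp a \<inter> perp b" "y2 \<in> perp a \<inter> perp b" "y2 \<notin> perp y1"
    using two_noncollinear_in_perp_inter[OF t(1) abc(1,2) nperp(1)] by blast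
  have yc: "y1 \<in> perp c" "y2 \<in> perp c"
    using y(1,2) perp_inter_subset_perp_mult[OF abc rc nl] by blast+
  have yP: "y1 \<in> P" "y2 \<in> P"
    using yc mem_perp by blast+
  show False
  proof (cases "d \<in> perp y1 \<inter> perp y2")
    case True
    have "a \<in> perp y1 \<inter> perp y2" "b \<in> perp y1 \<inter> perp y2" "c \<in> perp y1 \<inter> perp y2"
      using y yc abc perp_sym by blast+
    with True have "{a, b, c, d} \<subseteq> perp y1 \<inter> perp y2"
      by blast
    moreover have "card {a, b, c, d} = 4"
    proof -
      have "a \<noteq> b" "b \<noteq> c" "c \<noteq> a" "d \<noteq> a" "d \<noteq> b" "d \<noteq> c"
        using nperp nd self_mem_perp abc by blast+
      then show ?thesis
        by simp
    qed
    ultimately have "4 \<le> card (perp y1 \<inter> perp y2)"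
      using card_mono card_perp_inter_le(1)[OF yP y(3)] by metis
    then show False
      using card_perp_inter_le(2)[OF yP y(3)] t(2) by simp
  next
    case False
    then obtain y where "y \<in> perp a \<inter> perp b" "d \<notin> perp y"
      using y(1,2) by blast
    then have "d \<in> perp c"
      using perp_mult_if_not_perp[OF abc rc nl] d nd by blast
    with nd show False
      by blast
  qed
qed

lemma line_or_complete_arc:
  assumes t: "1 \<le> t" "t \<le> 2"
    and abc: "a \<in> P" "b \<in> P" "c \<in> P" and rabc: "r a \<otimes> r b \<otimes> r c = \<one>"
  shows "{a, b, c} \<in> L \<or> is_complete_arc P L 3 {a, b, c}"
proof (cases "{a, b, c} \<in> L")
  case False
  have rc: "r a \<otimes> r b = r c"
    using involution_mult_eq rabc abc r_involution by blast
  have nperp: "b \<notin> perp a" "c \<notin> perp b" "a \<notin> perp c"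
    using not_perp_if_r_mult_triple[OF abc rc False] by blast+
  have "is_arc P L 3 {a, b, c}"
  proof -
    have "\<not> collinear L a b" "\<not> collinear L b c" "\<not> collinear L c a"
      using nperp abc unfolding mem_perp by blast+
    then have "\<not> collinear L b a" "\<not> collinear L c b" "\<not> collinear L a c"
      using collinear_sym[of L b a] collinear_sym[of L c b] collinear_sym[of L a c] by blast+
    moreover have "a \<noteq> b" "b \<noteq> c" "c \<noteq> a"
      using nperp self_mem_perp abc by blast+
    ultimately show ?thesis
      using abc \<open>\<not> collinear L a b\<close> \<open>\<not> collinear L b c\<close> \<open>\<not> collinear L c a\<close>
      unfolding is_arc_def by auto
  qed
  moreover have "\<exists>x\<in>{a, b, c}. collinear L d x" if "d \<in> P" for d
  proof -
    have "d \<in> perp a \<union> perp b \<union> perp c"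
      using perp_mult_cover[OF t abc rc False that] .
    then have "collinear L a d \<or> collinear L b d \<or> collinear L c d"
      unfolding Un_iff mem_perp by blast
    then show ?thesis
      using collinear_sym[of L a d] collinear_sym[of L b d] collinear_sym[of L c d] by blast
  qed
  ultimately show ?thesis
    by (intro disjI2 is_complete_arcI)
qed simp

end

theorem corollary3p6:
  fixes P :: "'p set" and L :: "'p set set" and R :: "('g, 'b) monoid_scheme"
    and r :: "'p \<Rightarrow> 'g" and a b c :: 'p
  assumes "gen_quadrangle_2t 2 P L"
    and "faithful_representation P L R r"
    and "finite (carrier R)" and "card (carrier R) = 2 ^ 4"
    and "a \<in> P" and "b \<in> P" and "c \<in> P"
    and "a \<noteq> b" and "b \<noteq> c" and "a \<noteq> c"
    and "r a \<otimes>\<^bsub>R\<^esub> r b \<otimes>\<^bsub>R\<^esub> r c = \<one>\<^bsub>R\<^esub>"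
  shows "{a, b, c} \<in> L \<or> is_complete_arc P L 3 {a, b, c}"
proof -
  have "group R"
    using assms(2) unfolding faithful_representation_def representation_def by blast
  then interpret gq_representation 2 P L R r
    by (rule gq_representation.intro[OF gen_quadrangle.intro[OF assms(1)] _
          gq_representation_axioms.intro[OF assms(2)]])
  show ?thesis
    using line_or_complete_arc[OF _ _ assms(5-7,11)] by simp
qed

end
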